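(* Let $\mathcal G$ be a discrete groupoid (with quasi-invariant measure of full support) and $T:C_r^*(\mathcal G)\to C_r^*(\mathcal G)$ a bounded $C_0(X)$-linear operator. Define $\varphi_T(\gamma)=E(\lambda_{\gamma^{-1}}*T\lambda_\gamma)(d(\gamma))$ for $\gamma\in\mathcal G$. Then: (i) $\varphi_T\in C_b(\mathcal G)$ and $\|\varphi_T\|_\infty\le\|T\|$; (ii) if $T$ has finite $C_0(X)$-rank and takes values in $\mathrm{span}\{\lambda_\gamma:\gamma\in\mathcal G\}$, then $\varphi_T\in C_c(\mathcal G)$ and $\|\varphi_T\|_{M_0A(\mathcal G)}\le\|T\|_{cb}$.
   Context: A discrete groupoid is a countable groupoid with discrete topology, unit space $X=\mathcal G^{(0)}$, source $d$, range $r$. $C_c(\mathcal G)$ has convolution $f*g(\gamma)=\sum_{\beta\in\mathcal G_{d(\gamma)}}f(\gamma\beta^{-1})g(\beta)$ and involution $f^*(\gamma)=\overline{f(\gamma^{-1})}$; $\lambda_\gamma$ denotes the point mass $\delta_\gamma\in C_c(\mathcal G)$ viewed in $C_r^*(\mathcal G)$, the reduced groupoid $C^*$-algebra. $C_0(X)$ acts on the right by $f*a(\gamma)=f(\gamma)a(d(\gamma))$. $E:C_r^*(\mathcal G)\to C_0(X)$ is the conditional expectation extending restriction $C_c(\mathcal G)\to C_c(X)$, and $\langle f,g\rangle=E(f^**g)$ is the $C_0(X)$-valued inner product. An operator has $C_0(X)$-rank one if it is of the form $\Theta_{h,g}(f)=h*\langle g,f\rangle$ for some $g,h\in C_r^*(\mathcal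 G)$; finite $C_0(X)$-rank means a finite sum of such. $M_0A(\mathcal G)$ is the space of $\varphi\in L^\infty(\mathcal G)$ such that pointwise multiplication $M_\varphi:A(\mathcal G)\to A(\mathcal G)$ is completely bounded, with $\|\varphi\|_{M_0A(\mathcal G)}=\|M_\varphi\|_{cb}$, where $A(\mathcal G)$ is Renault's Fourier algebra of $\mathcal G$ (closure in the Fourier–Stieltjes algebra $B(\mathcal G)$ of coefficients of the left regular representation); equivalently, for continuous bounded $\varphi$, this equals the cb norm of pointwise multiplication $m_\varphi$ on $C_r^*(\mathcal G)$. *)

theory Defs
  imports "HOL-Analysis.Analysis"
begin

definition discrete_groupoid ::
  "'g set \<Rightarrow> 'g set \<Rightarrow> ('g \<Rightarrow> 'g) \<Rightarrow> ('g \<Rightarrow> 'g) \<Rightarrow> ('g \<Rightarrow> 'g \<Rightarrow> 'g) \<Rightarrow> ('g \<Rightarrow> 'g) \<Rightarrow> bool" where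
  "discrete_groupoid Gr X d r m i \<longleftrightarrow>
     countable Gr \<and> X \<subseteq> Gr \<and>
     (\<forall>a\<in>Gr. d a \<in> X \<and> r a \<in> X) \<and>
     (\<forall>x\<in>X. d x = x \<and> r x = x) \<and>
     (\<forall>a\<in>Gr. \<forall>b\<in>Gr. d a = r b \<longrightarrow> m a b \<in> Gr \<and> d (m a b) = d b \<and> r (m a b) = r a) \<and>
     (\<forall>a\<in>Gr. \<forall>b\<in>Gr. \<forall>c\<in>Gr. d a = r b \<and> d b = r c \<longrightarrow> m (m a b) c = m a (m b c)) \<and>
     (\<forall>a\<in>Gr. m (r a) a = a \<and> m a (d a) = a) \<and>
     (\<forall>a\<in>Gr. i a \<in> Gr \<and> d (i a) = r a \<and> r (i a) = d a \<and> m a (i a) = r a \<and> m (i a) a = d a)"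

text \<open>Elements of C*_r(G) are represented by their (faithful) coefficient functions
  G \<rightarrow> complex.  Norm of an n x n matrix over C*_r(G): supremum over units x of the operator
  norm of the matrix [lambda_x(A i j)] on l2(G_x)^n, computed on finitely supported vectors.\<close>

definition matNorm ::
  "'g set \<Rightarrow> 'g set \<Rightarrow> ('g \<Rightarrow> 'g) \<Rightarrow> ('g \<Rightarrow> 'g \<Rightarrow> 'g) \<Rightarrow> ('g \<Rightarrow> 'g)
   \<Rightarrow> nat \<Rightarrow> (nat \<Rightarrow> nat \<Rightarrow> 'g \<Rightarrow> complex) \<Rightarrow> ereal" where
  "matNorm Gr X d m i n A = Sup {ereal (cmod (\<Sum>k<n. \<Sum>j<n. \<Sum>\<gamma>\<in>F. \<Sum>\<beta>\<in>F.
          cnj (\<eta> k \<gamma>) * A k j (m \<gamma> (i \<beta>)) * \<xi> j \<beta>)) | x F \<xi> \<eta>.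
        x \<in> X \<and> finite F \<and> F \<subseteq> {\<gamma>\<in>Gr. d \<gamma> = x} \<and>
        (\<Sum>j<n. \<Sum>\<beta>\<in>F. (cmod (\<xi> j \<beta>))\<^sup>2) \<le> 1 \<and>
        (\<Sum>k<n. \<Sum>\<gamma>\<in>F. (cmod (\<eta> k \<gamma>))\<^sup>2) \<le> 1}"

definition redNorm ::
  "'g set \<Rightarrow> 'g set \<Rightarrow> ('g \<Rightarrow> 'g) \<Rightarrow> ('g \<Rightarrow> 'g \<Rightarrow> 'g) \<Rightarrow> ('g \<Rightarrow> 'g) \<Rightarrow> ('g \<Rightarrow> complex) \<Rightarrow> ereal" where
  "redNorm Gr X d m i a = matNorm Gr X d m i 1 (\<lambda>_ _. a)"

definition Cc :: "'g set \<Rightarrow> ('g \<Rightarrow> complex) set" where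
  "Cc Gr = {f. finite {\<gamma>. f \<gamma> \<noteq> 0} \<and> {\<gamma>. f \<gamma> \<noteq> 0} \<subseteq> Gr}"

definition Crs ::
  "'g set \<Rightarrow> 'g set \<Rightarrow> ('g \<Rightarrow> 'g) \<Rightarrow> ('g \<Rightarrow> 'g \<Rightarrow> 'g) \<Rightarrow> ('g \<Rightarrow> 'g) \<Rightarrow> ('g \<Rightarrow> complex) set" where
  "Crs Gr X d m i = {a. (\<forall>\<gamma>. \<gamma> \<notin> Gr \<longrightarrow> a \<gamma> = 0) \<and>
      (\<exists>F::nat \<Rightarrow> 'g \<Rightarrow> complex. (\<forall>n. F n \<in> Cc Gr) \<and>
          ((\<lambda>n. redNorm Gr X d m i (\<lambda>\<gamma>. a \<gamma> - F n \<gamma>)) \<longlongrightarrow> 0) sequentially)}"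

definition C0X :: "'g set \<Rightarrow> ('g \<Rightarrow> complex) set" where
  "C0X X = {f. (\<forall>\<gamma>. \<gamma> \<notin> X \<longrightarrow> f \<gamma> = 0) \<and> (\<forall>e>0. finite {x\<in>X. cmod (f x) \<ge> e})}"

definition conv ::
  "'g set \<Rightarrow> ('g \<Rightarrow> 'g) \<Rightarrow> ('g \<Rightarrow> 'g \<Rightarrow> 'g) \<Rightarrow> ('g \<Rightarrow> 'g)
   \<Rightarrow> ('g \<Rightarrow> complex) \<Rightarrow> ('g \<Rightarrow> complex) \<Rightarrow> 'g \<Rightarrow> complex" where
  "conv Gr d m i f g \<gamma> = (if \<gamma> \<in> Gr then
      infsum (\<lambda>\<beta>. f (m \<gamma> (i \<beta>)) * g \<beta>) {\<beta>\<in>Gr. d \<beta> = d \<gamma>} else 0)"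

definition invol :: "'g set \<Rightarrow> ('g \<Rightarrow> 'g) \<Rightarrow> ('g \<Rightarrow> complex) \<Rightarrow> 'g \<Rightarrow> complex" where
  "invol Gr i f \<gamma> = (if \<gamma> \<in> Gr then cnj (f (i \<gamma>)) else 0)"

definition ract :: "('g \<Rightarrow> 'g) \<Rightarrow> ('g \<Rightarrow> complex) \<Rightarrow> ('g \<Rightarrow> complex) \<Rightarrow> 'g \<Rightarrow> complex" where
  "ract d f a \<gamma> = f \<gamma> * a (d \<gamma>)"

definition condexp :: "'g set \<Rightarrow> ('g \<Rightarrow> complex) \<Rightarrow> 'g \<Rightarrow> complex" where
  "condexp X f \<gamma> = (if \<gamma> \<in> X then f \<gamma> else 0)"

definition inner_C0 ::
  "'g set \<Rightarrow> 'g set \<Rightarrow> ('g \<Rightarrow> 'g) \<Rightarrow> ('g \<Rightarrow> 'g \<Rightarrow> 'g) \<Rightarrow> ('g \<Rightarrow> 'g)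
   \<Rightarrow> ('g \<Rightarrow> complex) \<Rightarrow> ('g \<Rightarrow> complex) \<Rightarrow> 'g \<Rightarrow> complex" where
  "inner_C0 Gr X d m i f g = condexp X (conv Gr d m i (invol Gr i f) g)"

definition ptmass :: "'g \<Rightarrow> 'g \<Rightarrow> complex" where
  "ptmass \<gamma> = (\<lambda>\<beta>. if \<beta> = \<gamma> then 1 else 0)"

definition opNorm ::
  "'g set \<Rightarrow> 'g set \<Rightarrow> ('g \<Rightarrow> 'g) \<Rightarrow> ('g \<Rightarrow> 'g \<Rightarrow> 'g) \<Rightarrow> ('g \<Rightarrow> 'g)
   \<Rightarrow> (('g \<Rightarrow> complex) \<Rightarrow> ('g \<Rightarrow> complex)) \<Rightarrow> ereal" where
  "opNorm Gr X d m i T = Sup {redNorm Gr X d m i (T a) | a.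
       a \<in> Crs Gr X d m i \<and> redNorm Gr X d m i a \<le> 1}"

definition cbNorm ::
  "'g set \<Rightarrow> 'g set \<Rightarrow> ('g \<Rightarrow> 'g) \<Rightarrow> ('g \<Rightarrow> 'g \<Rightarrow> 'g) \<Rightarrow> ('g \<Rightarrow> 'g)
   \<Rightarrow> (('g \<Rightarrow> complex) \<Rightarrow> ('g \<Rightarrow> complex)) \<Rightarrow> ereal" where
  "cbNorm Gr X d m i S = Sup {matNorm Gr X d m i n (\<lambda>k j. S (A k j)) | n A.
       n \<ge> 1 \<and> (\<forall>k<n. \<forall>j<n. A k j \<in> Crs Gr X d m i) \<and> matNorm Gr X d m i n A \<le> 1}"

definition M0A_norm ::
  "'g set \<Rightarrow> 'g set \<Rightarrow> ('g \<Rightarrow> 'g) \<Rightarrow> ('g \<Rightarrow> 'g \<Rightarrow> 'g) \<Rightarrow> ('g \<Rightarrow> 'g) \<Rightarrow> ('g \<Rightarrow> complex) \<Rightarrow> ereal" where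
  "M0A_norm Gr X d m i \<phi> = cbNorm Gr X d m i (\<lambda>a \<gamma>. \<phi> \<gamma> * a \<gamma>)"

definition phiT ::
  "'g set \<Rightarrow> 'g set \<Rightarrow> ('g \<Rightarrow> 'g) \<Rightarrow> ('g \<Rightarrow> 'g \<Rightarrow> 'g) \<Rightarrow> ('g \<Rightarrow> 'g)
   \<Rightarrow> (('g \<Rightarrow> complex) \<Rightarrow> ('g \<Rightarrow> complex)) \<Rightarrow> 'g \<Rightarrow> complex" where
  "phiT Gr X d m i T \<gamma> = (if \<gamma> \<in> Gr then
      condexp X (conv Gr d m i (ptmass (i \<gamma>)) (T (ptmass \<gamma>))) (d \<gamma>) else 0)"

end

theory Submission
  imports Defs
begin

text \<open>
  (i) Testing \<open>T\<close> on the point mass at \<open>\<gamma>\<close> gives \<open>\<phi>\<^sub>T(\<gamma>) = (T \<lambda>\<^sub>\<gamma>)(\<gamma>)\<close>; a coefficient of an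
  element of \<open>C\<^sup>*\<^sub>r(G)\<close> is bounded by its reduced norm, and \<open>\<parallel>\<lambda>\<^sub>\<gamma>\<parallel> \<le> 1\<close>.

  (ii) For \<open>T = \<Sum>\<^sub>j h\<^sub>j \<langle>g\<^sub>j, -\<rangle>\<close> one gets \<open>\<phi>\<^sub>T(\<gamma>) = \<Sum>\<^sub>j h\<^sub>j(\<gamma>) g\<^sub>j(\<gamma>)\<^sup>*\<close>. The support of \<open>\<phi>\<^sub>T\<close> meets
  every source fibre in a finite set, because each \<open>T \<lambda>\<^sub>s\<close> is finitely supported and the last
  coordinate can be eliminated inductively; and it has only finitely many sources, since
  otherwise \<open>T\<close> applied to a summable combination of point masses with distinct sources would have
  infinite support. For the multiplier norm, a matrix \<open>A\<close> over \<open>C\<^sup>*\<^sub>r(G)\<close> tested on vectors supported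
  in a finite \<open>F \<subseteq> G\<^sub>x\<close> is replaced by \<open>B\<^sub>(\<^sub>k\<^sub>,\<^sub>\<gamma>\<^sub>)\<^sub>(\<^sub>j\<^sub>,\<^sub>\<beta>\<^sub>) = A\<^sub>k\<^sub>j(\<gamma>\<beta>\<^sup>-\<^sup>1) \<lambda>\<^bsub>\<gamma>\<beta>\<^sup>-\<^sup>1\<^esub>\<close>. Its form splits into a sum,
  over right translations \<open>g\<close>, of forms of \<open>A\<close>, so \<open>\<parallel>B\<parallel> \<le> \<parallel>A\<parallel>\<close>; and applying \<open>T\<close> entrywise to \<open>B\<close> and
  testing on vectors concentrated at the index arrows recovers the form of \<open>\<phi>\<^sub>T \<cdot> A\<close>.
\<close>

section \<open>Sums and finiteness\<close>

lemma sum_eq_single: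
  assumes "finite A" "a \<in> A" "\<And>x. x \<in> A \<Longrightarrow> x \<noteq> a \<Longrightarrow> f x = 0"
  shows "sum f A = f a"
  using assms by (simp add: sum.remove[of A a] sum.neutral)

lemma sum_sum_concentrated:
  fixes u v :: "'a \<Rightarrow> complex"
  assumes "finite F" "\<gamma> \<in> F" "\<beta> \<in> F"
  shows "(\<Sum>\<alpha>\<in>F. \<Sum>\<alpha>'\<in>F. cnj (if \<alpha> = \<gamma> then u \<alpha> else 0) * B \<alpha> \<alpha>' * (if \<alpha>' = \<beta> then v \<alpha>' else 0))
    = cnj (u \<gamma>) * B \<gamma> \<beta> * v \<beta>"
  using assms by (simp add: sum_eq_single[of F \<gamma>] sum_eq_single[of F \<beta>])

lemma infsum_eq_single:
  fixes f :: "'a \<Rightarrow> 'b::{comm_monoid_add,t2_space}"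
  assumes "a \<in> A" "\<And>x. x \<in> A \<Longrightarrow> x \<noteq> a \<Longrightarrow> f x = 0"
  shows "infsum f A = f a"
proof -
  have "infsum f A = infsum f {a}"
    by (rule infsum_cong_neutral) (use assms in auto)
  then show ?thesis by simp
qed

lemma sum_partial_matching_le:
  fixes f :: "'a \<Rightarrow> real" and g :: "'b \<Rightarrow> real"
  assumes "finite F1" "finite F2" "P \<subseteq> F1 \<times> F2" "inj_on fst P" "inj_on snd P"
  shows "(\<Sum>p\<in>P. f (fst p) * g (snd p)) \<le> ((\<Sum>a\<in>F1. (f a)\<^sup>2) + (\<Sum>b\<in>F2. (g b)\<^sup>2)) / 2"
proof -
  have "f a * g b \<le> ((f a)\<^sup>2 + (g b)\<^sup>2) / 2" for a b
    using sum_squares_bound[of "f a" "g b"] by simp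
  then have "(\<Sum>p\<in>P. f (fst p) * g (snd p)) \<le> (\<Sum>p\<in>P. ((f (fst p))\<^sup>2 + (g (snd p))\<^sup>2) / 2)"
    by (intro sum_mono)
  also have "\<dots> = ((\<Sum>a\<in>fst ` P. (f a)\<^sup>2) + (\<Sum>b\<in>snd ` P. (g b)\<^sup>2)) / 2"
    by (simp add: sum.reindex assms(4,5) sum.distrib add_divide_distrib sum_divide_distrib)
  also have "\<dots> \<le> ((\<Sum>a\<in>F1. (f a)\<^sup>2) + (\<Sum>b\<in>F2. (g b)\<^sup>2)) / 2"
    using assms(1-3) by (intro divide_right_mono add_mono sum_mono2) auto
  finally show ?thesis .
qed

lemma sum_power_half_le_two:
  assumes "finite K"
  shows "(\<Sum>k\<in>K. (1/2::real) ^ k) \<le> 2"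
proof -
  have "(\<Sum>k\<in>K. (1/2::real) ^ k) \<le> (\<Sum>k. (1/2::real) ^ k)"
    by (rule sum_le_suminf) (use assms in auto)
  also have "\<dots> = 2"
    using suminf_geometric[of "1/2::real"] by simp
  finally show ?thesis .
qed

lemma summable_on_power_half_injective:
  assumes "inj_on w V"
  shows "(\<lambda>x. if x \<in> V then (1/2::real) ^ w x else 0) summable_on A"
proof (rule nonneg_bdd_above_summable_on)
  have "(\<Sum>x\<in>F. if x \<in> V then (1/2::real) ^ w x else 0) \<le> 2" if "finite F" for F
  proof -
    have "(\<Sum>x\<in>F. if x \<in> V then (1/2::real) ^ w x else 0) = (\<Sum>x\<in>F \<inter> V. (1/2) ^ w x)"
      using that by (rule sum.inter_restrict[symmetric])
    also have "\<dots> = (\<Sum>n\<in>w ` (F \<inter> V). (1/2) ^ n)"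
      using inj_on_subset[OF assms Int_lower2] by (simp add: sum.reindex)
    also have "\<dots> \<le> 2"
      using that by (intro sum_power_half_le_two) simp
    finally show ?thesis .
  qed
  then show "bdd_above (sum (\<lambda>x. if x \<in> V then (1/2::real) ^ w x else 0) ` {F. F \<subseteq> A \<and> finite F})"
    by (intro bdd_aboveI2) auto
qed simp

lemma sum_eliminate_last:
  fixes h v :: "'a \<Rightarrow> nat \<Rightarrow> 'b::field"
  assumes "v s0 k \<noteq> 0" "(\<Sum>j<Suc k. h \<alpha> j * v s0 j) = 0"
  shows "(\<Sum>j<k. h \<alpha> j * (v s j - v s k / v s0 k * v s0 j)) = (\<Sum>j<Suc k. h \<alpha> j * v s j)"
proof -
  have "(\<Sum>j<k. h \<alpha> j * (v s j - v s k / v s0 k * v s0 j)) = (\<Sum>j<Suc k. h \<alpha> j * (v s j - v s k / v s0 k * v s0 j))"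
    using assms(1) by simp
  also have "\<dots> = (\<Sum>j<Suc k. h \<alpha> j * v s j) - v s k / v s0 k * (\<Sum>j<Suc k. h \<alpha> j * v s0 j)"
    by (simp add: algebra_simps sum_subtractf sum_distrib_left)
  also have "\<dots> = (\<Sum>j<Suc k. h \<alpha> j * v s j)"
    using assms(2) by simp
  finally show ?thesis .
qed

lemma finite_diagonal_support:
  fixes h v :: "'a \<Rightarrow> nat \<Rightarrow> 'b::field"
  assumes "\<And>s. s \<in> A \<Longrightarrow> finite {\<alpha>\<in>A. (\<Sum>j<k. h \<alpha> j * v s j) \<noteq> 0}"
  shows "finite {\<alpha>\<in>A. (\<Sum>j<k. h \<alpha> j * v \<alpha> j) \<noteq> 0}"
  using assms
proof (induction k arbitrary: A v)
  case 0
  then show ?case by simp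
next
  case (Suc k)
  show ?case
  proof (cases "\<exists>s0\<in>A. v s0 k \<noteq> 0")
    case False
    then have drop_last: "(\<Sum>j<Suc k. h \<alpha> j * v s j) = (\<Sum>j<k. h \<alpha> j * v s j)" if "s \<in> A" for \<alpha> s
      using that by simp
    have "finite {\<alpha>\<in>A. (\<Sum>j<k. h \<alpha> j * v \<alpha> j) \<noteq> 0}"
    proof (rule Suc.IH)
      fix s assume "s \<in> A"
      then show "finite {\<alpha>\<in>A. (\<Sum>j<k. h \<alpha> j * v s j) \<noteq> 0}"
        using Suc.prems[OF \<open>s \<in> A\<close>] by (simp only: drop_last[OF \<open>s \<in> A\<close>])
    qed
    moreover have "{\<alpha>\<in>A. (\<Sum>j<Suc k. h \<alpha> j * v \<alpha> j) \<noteq> 0} = {\<alpha>\<in>A. (\<Sum>j<k. h \<alpha> j * v \<alpha> j) \<noteq> 0}"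
      by (intro Collect_cong conj_cong refl) (simp only: drop_last)
    ultimately show ?thesis
      by simp
  next
    case True
    then obtain s0 where s0: "s0 \<in> A" "v s0 k \<noteq> 0" by blast
    \<comment> \<open>off the finite support \<open>E\<close> of the row of \<open>s0\<close>, the last coordinate can be eliminated against it\<close>
    define E where "E = {\<alpha>\<in>A. (\<Sum>j<Suc k. h \<alpha> j * v s0 j) \<noteq> 0}"
    define v' where "v' s j = v s j - v s k / v s0 k * v s0 j" for s j
    have reduce: "(\<Sum>j<k. h \<alpha> j * v' s j) = (\<Sum>j<Suc k. h \<alpha> j * v s j)" if "\<alpha> \<in> A - E" for \<alpha> s
      using that sum_eliminate_last[of v s0 k h \<alpha> s] s0(2) by (simp add: v'_def E_def)
    have "finite {\<alpha>\<in>A - E. (\<Sum>j<k. h \<alpha> j * v' \<alpha> j) \<noteq> 0}"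
    proof (rule Suc.IH)
      fix s assume "s \<in> A - E"
      have "{\<alpha>\<in>A - E. (\<Sum>j<k. h \<alpha> j * v' s j) \<noteq> 0} \<subseteq> {\<alpha>\<in>A. (\<Sum>j<Suc k. h \<alpha> j * v s j) \<noteq> 0}"
        using reduce by auto
      then show "finite {\<alpha>\<in>A - E. (\<Sum>j<k. h \<alpha> j * v' s j) \<noteq> 0}"
        using Suc.prems \<open>s \<in> A - E\<close> by (blast intro: finite_subset)
    qed
    moreover have "finite E"
      using Suc.prems s0 by (simp add: E_def)
    moreover have "{\<alpha>\<in>A. (\<Sum>j<Suc k. h \<alpha> j * v \<alpha> j) \<noteq> 0} \<subseteq> {\<alpha>\<in>A - E. (\<Sum>j<k. h \<alpha> j * v' \<alpha> j) \<noteq> 0} \<union> E"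
      using reduce by auto
    ultimately show ?thesis
      by (meson finite_UnI finite_subset)
  qed
qed

lemma infinite_image_obtains_inj_subset:
  assumes "infinite (f ` S)"
  obtains V where "V \<subseteq> S" "inj_on f V" "infinite V"
proof -
  let ?V = "inv_into S f ` f ` S"
  have "?V \<subseteq> S" "inj_on f ?V"
    by (auto simp: inv_into_into inj_on_def f_inv_into_f)
  moreover have "infinite ?V"
    using assms inj_on_inv_into[of "f ` S" f S] by (auto dest: finite_imageD)
  ultimately show ?thesis
    using that by blast
qed

section \<open>Discrete groupoids\<close>

locale groupoid =
  fixes Gr X :: "'g set" and d r i :: "'g \<Rightarrow> 'g" and m :: "'g \<Rightarrow> 'g \<Rightarrow> 'g"
  assumes discrete_groupoid: "discrete_groupoid Gr X d r m i"
begin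

lemma countable_arrows: "countable Gr"
  and units_subset: "X \<subseteq> Gr"
  and d_in_units [simp]: "a \<in> Gr \<Longrightarrow> d a \<in> X"
  and r_in_units [simp]: "a \<in> Gr \<Longrightarrow> r a \<in> X"
  and d_unit [simp]: "x \<in> X \<Longrightarrow> d x = x"
  and r_unit [simp]: "x \<in> X \<Longrightarrow> r x = x"
  and mult_closed [simp]: "a \<in> Gr \<Longrightarrow> b \<in> Gr \<Longrightarrow> d a = r b \<Longrightarrow> m a b \<in> Gr"
  and d_mult [simp]: "a \<in> Gr \<Longrightarrow> b \<in> Gr \<Longrightarrow> d a = r b \<Longrightarrow> d (m a b) = d b"
  and r_mult [simp]: "a \<in> Gr \<Longrightarrow> b \<in> Gr \<Longrightarrow> d a = r b \<Longrightarrow> r (m a b) = r a"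
  and mult_assoc:
    "a \<in> Gr \<Longrightarrow> b \<in> Gr \<Longrightarrow> c \<in> Gr \<Longrightarrow> d a = r b \<Longrightarrow> d b = r c \<Longrightarrow> m (m a b) c = m a (m b c)"
  and mult_r_left [simp]: "a \<in> Gr \<Longrightarrow> m (r a) a = a"
  and mult_d_right [simp]: "a \<in> Gr \<Longrightarrow> m a (d a) = a"
  and inv_closed [simp]: "a \<in> Gr \<Longrightarrow> i a \<in> Gr"
  and d_inv [simp]: "a \<in> Gr \<Longrightarrow> d (i a) = r a"
  and r_inv [simp]: "a \<in> Gr \<Longrightarrow> r (i a) = d a"
  and mult_inv_right [simp]: "a \<in> Gr \<Longrightarrow> m a (i a) = r a"
  and mult_inv_left [simp]: "a \<in> Gr \<Longrightarrow> m (i a) a = d a"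
  using discrete_groupoid unfolding discrete_groupoid_def by blast+

lemma d_in_arrows [simp]: "a \<in> Gr \<Longrightarrow> d a \<in> Gr"
  using units_subset by auto

lemma inv_mult_cancel_left [simp]:
  assumes "a \<in> Gr" "b \<in> Gr" "d a = r b"
  shows "m (i a) (m a b) = b"
  using assms mult_assoc[of "i a" a b, symmetric] by simp

lemma mult_inv_cancel_left [simp]:
  assumes "a \<in> Gr" "b \<in> Gr" "r a = r b"
  shows "m a (m (i a) b) = b"
  using assms mult_assoc[of a "i a" b, symmetric] by simp

lemma mult_inv_cancel_right [simp]:
  assumes "a \<in> Gr" "b \<in> Gr" "d b = r a"
  shows "m (m b a) (i a) = b"
proof -
  have "m (m b a) (i a) = m b (r a)"
    using assms mult_assoc[of b a "i a"] by simp
  also have "\<dots> = b"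
    using assms(3) mult_d_right[OF assms(2)] by simp
  finally show ?thesis .
qed

lemma inv_mult_cancel_right [simp]:
  assumes "a \<in> Gr" "b \<in> Gr" "d a = d b"
  shows "m (m b (i a)) a = b"
proof -
  have "m (m b (i a)) a = m b (d a)"
    using assms mult_assoc[of b "i a" a] by simp
  also have "\<dots> = b"
    using assms(3) mult_d_right[OF assms(2)] by simp
  finally show ?thesis .
qed

lemma left_cancel:
  assumes "a \<in> Gr" "b \<in> Gr" "c \<in> Gr" "d a = r b" "d a = r c" "m a b = m a c"
  shows "b = c"
  by (metis assms inv_mult_cancel_left)

lemma right_cancel:
  assumes "a \<in> Gr" "b \<in> Gr" "c \<in> Gr" "d b = r a" "d c = r a" "m b a = m c a"
  shows "b = c"
  by (metis assms mult_inv_cancel_right)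

lemma mult_d_inv [simp]: "a \<in> Gr \<Longrightarrow> m (d a) (i a) = i a"
  using mult_r_left[of "i a"] by simp

lemma inv_unit [simp]:
  assumes "x \<in> X"
  shows "i x = x"
proof -
  have "x \<in> Gr"
    using assms units_subset by blast
  then have "i x = m (i x) (d (i x))"
    by (intro mult_d_right[symmetric]) simp
  also have "\<dots> = m (i x) x"
    using \<open>x \<in> Gr\<close> assms by simp
  also have "\<dots> = x"
    using \<open>x \<in> Gr\<close> assms by simp
  finally show ?thesis .
qed

lemma inv_inv [simp]: "a \<in> Gr \<Longrightarrow> i (i a) = a"
  by (metis inv_mult_cancel_left[of "i a" a] mult_d_right[of "i (i a)"] inv_closed d_inv r_inv mult_inv_left)

lemma inv_mult:
  assumes "a \<in> Gr" "b \<in> Gr" "d a = r b"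
  shows "i (m a b) = m (i b) (i a)"
proof (rule left_cancel[of "m a b"])
  have "m (m a b) (m (i b) (i a)) = m a (m b (m (i b) (i a)))"
    using assms by (intro mult_assoc) auto
  also have "\<dots> = m a (i a)"
    using assms by simp
  finally show "m (m a b) (i (m a b)) = m (m a b) (m (i b) (i a))"
    using assms by simp
qed (use assms in auto)

abbreviation fibre :: "'g \<Rightarrow> 'g set" where
  "fibre x \<equiv> {\<gamma>\<in>Gr. d \<gamma> = x}"

lemma quotient_level_set_injective:
  assumes "F \<subseteq> fibre x"
  shows "inj_on fst {p\<in>F \<times> F. m (fst p) (i (snd p)) = s}"
    and "inj_on snd {p\<in>F \<times> F. m (fst p) (i (snd p)) = s}"
proof -
  have "b = b'" if "a \<in> F" "b \<in> F" "b' \<in> F" "m a (i b) = m a (i b')" for a b b'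
  proof -
    from assms that have "a \<in> Gr" "b \<in> Gr" "b' \<in> Gr" "d a = d b" "d a = d b'"
      by auto
    then have "i b = i b'"
      using left_cancel[of a "i b" "i b'"] that(4) by simp
    with \<open>b \<in> Gr\<close> \<open>b' \<in> Gr\<close> show "b = b'"
      by (metis inv_inv)
  qed
  then show "inj_on fst {p\<in>F \<times> F. m (fst p) (i (snd p)) = s}"
    by (fastforce simp: inj_on_def)
  have "a = a'" if "a \<in> F" "a' \<in> F" "b \<in> F" "m a (i b) = m a' (i b)" for a a' b
  proof -
    from assms that have "a \<in> Gr" "a' \<in> Gr" "b \<in> Gr" "d a = d b" "d a' = d b"
      by auto
    then show "a = a'"
      using right_cancel[of "i b" a a'] that(4) by simp
  qed
  then show "inj_on snd {p\<in>F \<times> F. m (fst p) (i (snd p)) = s}"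
    by (fastforce simp: inj_on_def)
qed


lemma quotient_right_translate:
  assumes "a \<in> Gr" "b \<in> Gr" "g \<in> Gr" "d a = r g" "d b = r g"
  shows "m (m a g) (i (m b g)) = m a (i b)"
proof -
  have "m (m a g) (i (m b g)) = m (m a g) (m (i g) (i b))"
    using assms by (simp add: inv_mult)
  also have "\<dots> = m a (m g (m (i g) (i b)))"
    using assms by (intro mult_assoc) auto
  also have "m g (m (i g) (i b)) = i b"
    using assms by simp
  finally show ?thesis .
qed

lemma quotient_eq_translate:
  assumes "\<alpha> \<in> Gr" "\<alpha>' \<in> Gr" "\<gamma> \<in> Gr" "\<beta> \<in> Gr" "d \<alpha> = d \<alpha>'" "d \<gamma> = d \<beta>"
    and eq: "m \<alpha> (i \<alpha>') = m \<gamma> (i \<beta>)"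
  shows "r \<alpha> = r \<gamma>" and "m \<beta> (m (i \<gamma>) \<alpha>) = \<alpha>'"
proof -
  show "r \<alpha> = r \<gamma>"
    using arg_cong[OF eq, of r] assms(1-6) by simp
  have "r \<alpha>' = r \<beta>"
    using arg_cong[OF eq, of d] assms(1-6) by simp
  have "\<alpha> = m (m \<alpha> (i \<alpha>')) \<alpha>'"
    using assms(1-6) by simp
  also have "\<dots> = m \<gamma> (m (i \<beta>) \<alpha>')"
    unfolding eq using assms \<open>r \<alpha>' = r \<beta>\<close> by (intro mult_assoc) auto
  finally have "m (i \<gamma>) \<alpha> = m (i \<beta>) \<alpha>'"
    using assms \<open>r \<alpha>' = r \<beta>\<close> by simp
  then show "m \<beta> (m (i \<gamma>) \<alpha>) = \<alpha>'"
    using assms \<open>r \<alpha>' = r \<beta>\<close> by simp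
qed

lemma bij_betw_translates_same_quotient:
  assumes "\<gamma> \<in> fibre x" "\<beta> \<in> fibre x" "F' \<subseteq> fibre y"
    and "G0 \<subseteq> {g\<in>Gr. r g = x}" "{g\<in>Gr. r g = x \<and> m \<gamma> g \<in> F'} \<subseteq> G0"
  shows "bij_betw (\<lambda>g. (m \<gamma> g, m \<beta> g)) {g\<in>G0. m \<gamma> g \<in> F' \<and> m \<beta> g \<in> F'}
      {p\<in>F' \<times> F'. m (fst p) (i (snd p)) = m \<gamma> (i \<beta>)}"
proof (rule bij_betwI')
  fix g g' assume "g \<in> {g\<in>G0. m \<gamma> g \<in> F' \<and> m \<beta> g \<in> F'}" "g' \<in> {g\<in>G0. m \<gamma> g \<in> F' \<and> m \<beta> g \<in> F'}"
  then have "g \<in> Gr" "r g = x" "g' \<in> Gr" "r g' = x"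
    using assms(4) by auto
  then show "((m \<gamma> g, m \<beta> g) = (m \<gamma> g', m \<beta> g')) = (g = g')"
    using assms(1) left_cancel[of \<gamma> g g'] by auto
next
  fix g assume "g \<in> {g\<in>G0. m \<gamma> g \<in> F' \<and> m \<beta> g \<in> F'}"
  then show "(m \<gamma> g, m \<beta> g) \<in> {p\<in>F' \<times> F'. m (fst p) (i (snd p)) = m \<gamma> (i \<beta>)}"
    using assms quotient_right_translate[of \<gamma> \<beta> g] by auto
next
  fix p assume "p \<in> {p\<in>F' \<times> F'. m (fst p) (i (snd p)) = m \<gamma> (i \<beta>)}"
  then obtain \<alpha> \<alpha>' where p: "p = (\<alpha>, \<alpha>')" "\<alpha> \<in> F'" "\<alpha>' \<in> F'" "m \<alpha> (i \<alpha>') = m \<gamma> (i \<beta>)"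
    by auto
  then have mem: "\<alpha> \<in> Gr" "\<alpha>' \<in> Gr" "d \<alpha> = d \<alpha>'"
    using assms(3) by auto
  have "r \<alpha> = r \<gamma>" and translate: "m \<beta> (m (i \<gamma>) \<alpha>) = \<alpha>'"
    using quotient_eq_translate[OF mem(1,2) _ _ mem(3) _ p(4)] assms(1,2) by auto
  then have "m (i \<gamma>) \<alpha> \<in> {g\<in>G0. m \<gamma> g \<in> F' \<and> m \<beta> g \<in> F'}" "m \<gamma> (m (i \<gamma>) \<alpha>) = \<alpha>"
    using assms p(2,3) mem translate by auto
  then show "\<exists>g\<in>{g\<in>G0. m \<gamma> g \<in> F' \<and> m \<beta> g \<in> F'}. p = (m \<gamma> g, m \<beta> g)"
    using p(1) translate by (intro bexI[of _ "m (i \<gamma>) \<alpha>"]) auto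
qed

lemma sum_pairs_same_quotient:
  fixes Y :: "'g \<Rightarrow> 'g \<Rightarrow> 'b::comm_monoid_add"
  assumes "\<gamma> \<in> fibre x" "\<beta> \<in> fibre x" "finite F'" "F' \<subseteq> fibre y"
    and "finite G0" "G0 \<subseteq> {g\<in>Gr. r g = x}" "{g\<in>Gr. r g = x \<and> m \<gamma> g \<in> F'} \<subseteq> G0"
  shows "(\<Sum>\<alpha>\<in>F'. \<Sum>\<alpha>'\<in>F'. if m \<alpha> (i \<alpha>') = m \<gamma> (i \<beta>) then Y \<alpha> \<alpha>' else 0)
       = (\<Sum>g\<in>G0. if m \<gamma> g \<in> F' \<and> m \<beta> g \<in> F' then Y (m \<gamma> g) (m \<beta> g) else 0)"
proof -
  have "(\<Sum>\<alpha>\<in>F'. \<Sum>\<alpha>'\<in>F'. if m \<alpha> (i \<alpha>') = m \<gamma> (i \<beta>) then Y \<alpha> \<alpha>' else 0)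
      = (\<Sum>p\<in>{p\<in>F' \<times> F'. m (fst p) (i (snd p)) = m \<gamma> (i \<beta>)}. Y (fst p) (snd p))"
    using assms(3) by (simp add: sum.cartesian_product case_prod_beta sum.inter_filter)
  also have "\<dots> = (\<Sum>g\<in>{g\<in>G0. m \<gamma> g \<in> F' \<and> m \<beta> g \<in> F'}. Y (m \<gamma> g) (m \<beta> g))"
    using bij_betw_translates_same_quotient[OF assms(1,2,4,6,7)] by (simp add: sum.reindex_bij_betw[symmetric])
  also have "\<dots> = (\<Sum>g\<in>G0. if m \<gamma> g \<in> F' \<and> m \<beta> g \<in> F' then Y (m \<gamma> g) (m \<beta> g) else 0)"
    using assms(5) by (simp add: sum.inter_filter)
  finally show ?thesis .
qed

lemma finite_translates:
  assumes "finite F" "F \<subseteq> fibre x" "finite F'"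
  shows "finite {g\<in>Gr. r g = x \<and> (\<exists>\<gamma>\<in>F. m \<gamma> g \<in> F')}"
proof -
  have "{g\<in>Gr. r g = x \<and> (\<exists>\<gamma>\<in>F. m \<gamma> g \<in> F')} \<subseteq> (\<lambda>(\<gamma>, \<alpha>). m (i \<gamma>) \<alpha>) ` (F \<times> F')"
  proof
    fix g assume "g \<in> {g\<in>Gr. r g = x \<and> (\<exists>\<gamma>\<in>F. m \<gamma> g \<in> F')}"
    then obtain \<gamma> where "\<gamma> \<in> F" "m \<gamma> g \<in> F'" "g \<in> Gr" "r g = x"
      by auto
    moreover from this have "m (i \<gamma>) (m \<gamma> g) = g"
      using assms(2) by auto
    ultimately show "g \<in> (\<lambda>(\<gamma>, \<alpha>). m (i \<gamma>) \<alpha>) ` (F \<times> F')"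
      by force
  qed
  then show ?thesis
    by (rule finite_subset) (use assms(1,3) in simp)
qed

end

section \<open>Matrix norms over \<open>C\<^sup>*\<^sub>r(G)\<close>\<close>

definition vec_sqnorm :: "'k set \<Rightarrow> 'g set \<Rightarrow> ('k \<Rightarrow> 'g \<Rightarrow> complex) \<Rightarrow> real" where
  "vec_sqnorm I F \<eta> = (\<Sum>k\<in>I. \<Sum>\<gamma>\<in>F. (cmod (\<eta> k \<gamma>))\<^sup>2)"

lemma vec_sqnorm_nonneg: "0 \<le> vec_sqnorm I F \<eta>"
  unfolding vec_sqnorm_def by (intro sum_nonneg) auto

lemma vec_sqnorm_scale: "vec_sqnorm I F (\<lambda>k \<gamma>. of_real t * \<eta> k \<gamma>) = t\<^sup>2 * vec_sqnorm I F \<eta>"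
  by (simp add: vec_sqnorm_def norm_mult power_mult_distrib sum_distrib_left)

lemma vec_sqnorm_reindex: "bij_betw \<pi> I J \<Longrightarrow> vec_sqnorm I F (\<lambda>p. \<eta> (\<pi> p)) = vec_sqnorm J F \<eta>"
  unfolding vec_sqnorm_def by (rule sum.reindex_bij_betw)

lemma vec_sqnorm_product:
  "vec_sqnorm (I \<times> J) F \<eta> = (\<Sum>k\<in>I. \<Sum>\<gamma>\<in>J. \<Sum>\<alpha>\<in>F. (cmod (\<eta> (k, \<gamma>) \<alpha>))\<^sup>2)"
  unfolding vec_sqnorm_def by (simp only: sum.cartesian_product')

lemma vec_sqnorm_concentrated:
  assumes "finite F"
  shows "vec_sqnorm (I \<times> F) F (\<lambda>P \<alpha>. if \<alpha> = snd P then \<eta> (fst P) \<alpha> else 0) = vec_sqnorm I F \<eta>"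
  using assms unfolding vec_sqnorm_product
  by (simp add: vec_sqnorm_def if_distrib[of cmod] if_distrib[of "\<lambda>t::real. t\<^sup>2"] cong: if_cong)

context groupoid
begin

definition mat_form ::
  "'k set \<Rightarrow> ('k \<Rightarrow> 'k \<Rightarrow> 'g \<Rightarrow> complex) \<Rightarrow> 'g set \<Rightarrow> ('k \<Rightarrow> 'g \<Rightarrow> complex) \<Rightarrow> ('k \<Rightarrow> 'g \<Rightarrow> complex) \<Rightarrow> complex"
  where "mat_form I A F \<eta> \<xi> = (\<Sum>k\<in>I. \<Sum>j\<in>I. \<Sum>\<gamma>\<in>F. \<Sum>\<beta>\<in>F. cnj (\<eta> k \<gamma>) * A k j (m \<gamma> (i \<beta>)) * \<xi> j \<beta>)"

lemma mat_form_scale: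
  "mat_form I A F (\<lambda>k \<gamma>. of_real s * \<eta> k \<gamma>) (\<lambda>k \<gamma>. of_real t * \<xi> k \<gamma>) = of_real (s * t) * mat_form I A F \<eta> \<xi>"
  by (simp add: mat_form_def sum_distrib_left mult_ac)

lemma mat_form_reindex:
  assumes "bij_betw \<pi> I J"
  shows "mat_form I (\<lambda>p q. B (\<pi> p) (\<pi> q)) F (\<lambda>p. \<eta> (\<pi> p)) (\<lambda>p. \<xi> (\<pi> p)) = mat_form J B F \<eta> \<xi>"
proof -
  have "J = \<pi> ` I" "inj_on \<pi> I"
    using assms by (auto simp: bij_betw_def)
  then show ?thesis
    unfolding mat_form_def by (simp add: sum.reindex)
qed

lemma mat_form_product:
  "mat_form (I \<times> J) B F \<eta> \<xi> = (\<Sum>k\<in>I. \<Sum>\<gamma>\<in>J. \<Sum>j\<in>I. \<Sum>\<beta>\<in>J. \<Sum>\<alpha>\<in>F. \<Sum>\<alpha>'\<in>F.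
      cnj (\<eta> (k, \<gamma>) \<alpha>) * B (k, \<gamma>) (j, \<beta>) (m \<alpha> (i \<alpha>')) * \<xi> (j, \<beta>) \<alpha>')"
  unfolding mat_form_def by (simp only: sum.cartesian_product')

lemma matNorm_mat_form: "matNorm Gr X d m i n A = Sup {ereal (cmod (mat_form {..<n} A F \<eta> \<xi>)) | x F \<xi> \<eta>.
    x \<in> X \<and> finite F \<and> F \<subseteq> fibre x \<and> vec_sqnorm {..<n} F \<xi> \<le> 1 \<and> vec_sqnorm {..<n} F \<eta> \<le> 1}"
  by (simp add: matNorm_def mat_form_def vec_sqnorm_def)

lemma mat_form_le_matNorm:
  assumes "x \<in> X" "finite F" "F \<subseteq> fibre x" "vec_sqnorm {..<n} F \<xi> \<le> 1" "vec_sqnorm {..<n} F \<eta> \<le> 1"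
  shows "ereal (cmod (mat_form {..<n} A F \<eta> \<xi>)) \<le> matNorm Gr X d m i n A"
  unfolding matNorm_mat_form by (rule Sup_upper) (use assms in blast)

lemma matNorm_leI:
  assumes "\<And>x F \<xi> \<eta>. x \<in> X \<Longrightarrow> finite F \<Longrightarrow> F \<subseteq> fibre x \<Longrightarrow> vec_sqnorm {..<n} F \<xi> \<le> 1
      \<Longrightarrow> vec_sqnorm {..<n} F \<eta> \<le> 1 \<Longrightarrow> cmod (mat_form {..<n} A F \<eta> \<xi>) \<le> M"
  shows "matNorm Gr X d m i n A \<le> ereal M"
  unfolding matNorm_mat_form by (rule Sup_least) (use assms in auto)

lemma matNorm_nonneg:
  assumes "X \<noteq> {}"
  shows "0 \<le> matNorm Gr X d m i n A"
proof -
  obtain x where "x \<in> X"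
    using assms by blast
  then have "ereal (cmod (mat_form {..<n} A {} (\<lambda>_ _. 0) (\<lambda>_ _. 0))) \<le> matNorm Gr X d m i n A"
    by (intro mat_form_le_matNorm) (auto simp: vec_sqnorm_def)
  then show ?thesis
    by (simp add: mat_form_def zero_ereal_def)
qed

lemma mat_form_le_half_sqnorms:
  assumes "matNorm Gr X d m i n A \<le> 1" "x \<in> X" "finite F" "F \<subseteq> fibre x"
  shows "cmod (mat_form {..<n} A F \<eta> \<xi>) \<le> (vec_sqnorm {..<n} F \<eta> + vec_sqnorm {..<n} F \<xi>) / 2"
proof (rule field_le_epsilon)
  fix \<delta> :: real assume "0 < \<delta>"
  have nonneg: "0 \<le> vec_sqnorm {..<n} F \<eta>" "0 \<le> vec_sqnorm {..<n} F \<xi>"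
    by (rule vec_sqnorm_nonneg)+
  define a where "a = sqrt (vec_sqnorm {..<n} F \<eta> + \<delta>)"
  define b where "b = sqrt (vec_sqnorm {..<n} F \<xi> + \<delta>)"
  have a: "0 < a" "a\<^sup>2 = vec_sqnorm {..<n} F \<eta> + \<delta>" and b: "0 < b" "b\<^sup>2 = vec_sqnorm {..<n} F \<xi> + \<delta>"
    using \<open>0 < \<delta>\<close> nonneg by (auto simp: a_def b_def)
  have "vec_sqnorm {..<n} F (\<lambda>k \<gamma>. of_real (1/a) * \<eta> k \<gamma>) \<le> 1"
    "vec_sqnorm {..<n} F (\<lambda>k \<gamma>. of_real (1/b) * \<xi> k \<gamma>) \<le> 1"
    unfolding vec_sqnorm_scale using a b \<open>0 < \<delta>\<close> nonneg by (simp_all add: power_divide field_simps)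
  then have "ereal (cmod (mat_form {..<n} A F (\<lambda>k \<gamma>. of_real (1/a) * \<eta> k \<gamma>) (\<lambda>k \<gamma>. of_real (1/b) * \<xi> k \<gamma>))) \<le> 1"
    using mat_form_le_matNorm[OF assms(2-4)] assms(1) order_trans by blast
  then have "cmod (of_real (1/a * (1/b)) * mat_form {..<n} A F \<eta> \<xi>) \<le> 1"
    by (simp only: mat_form_scale one_ereal_def ereal_less_eq)
  then have "cmod (mat_form {..<n} A F \<eta> \<xi>) \<le> a * b"
    using a b by (simp add: norm_divide norm_mult field_simps)
  also have "\<dots> \<le> (a\<^sup>2 + b\<^sup>2) / 2"
    using sum_squares_bound[of a b] by simp
  finally show "cmod (mat_form {..<n} A F \<eta> \<xi>) \<le> (vec_sqnorm {..<n} F \<eta> + vec_sqnorm {..<n} F \<xi>) / 2 + \<delta>"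
    using a b by (simp add: field_simps)
qed

lemma matNorm_reindex_leI:
  assumes \<pi>: "bij_betw \<pi> {..<N} J"
    and bound: "\<And>y F \<xi> \<eta>. y \<in> X \<Longrightarrow> finite F \<Longrightarrow> F \<subseteq> fibre y \<Longrightarrow> vec_sqnorm J F \<xi> \<le> 1
      \<Longrightarrow> vec_sqnorm J F \<eta> \<le> 1 \<Longrightarrow> cmod (mat_form J B F \<eta> \<xi>) \<le> M"
  shows "matNorm Gr X d m i N (\<lambda>p q. B (\<pi> p) (\<pi> q)) \<le> ereal M"
proof (rule matNorm_leI)
  fix y F \<xi> \<eta> assume "y \<in> X" "finite F" "F \<subseteq> fibre y"
    and unit: "vec_sqnorm {..<N} F \<xi> \<le> 1" "vec_sqnorm {..<N} F \<eta> \<le> 1"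
  define \<pi>' where "\<pi>' = inv_into {..<N} \<pi>"
  have left_inv: "\<pi>' (\<pi> p) = p" if "p \<in> {..<N}" for p
    using that bij_betw_inv_into_left[OF \<pi>] by (simp add: \<pi>'_def)
  have "mat_form {..<N} (\<lambda>p q. B (\<pi> p) (\<pi> q)) F \<eta> \<xi>
      = mat_form {..<N} (\<lambda>p q. B (\<pi> p) (\<pi> q)) F (\<lambda>p. \<eta> (\<pi>' (\<pi> p))) (\<lambda>p. \<xi> (\<pi>' (\<pi> p)))"
    unfolding mat_form_def by (intro sum.cong refl) (simp add: left_inv)
  also have "\<dots> = mat_form J B F (\<lambda>q. \<eta> (\<pi>' q)) (\<lambda>q. \<xi> (\<pi>' q))"
    by (rule mat_form_reindex[OF \<pi>])
  finally have "mat_form {..<N} (\<lambda>p q. B (\<pi> p) (\<pi> q)) F \<eta> \<xi> = mat_form J B F (\<lambda>q. \<eta> (\<pi>' q)) (\<lambda>q. \<xi> (\<pi>' q))" .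
  moreover have "vec_sqnorm J F (\<lambda>q. w (\<pi>' q)) = vec_sqnorm {..<N} F w" for w
  proof -
    have "vec_sqnorm J F (\<lambda>q. w (\<pi>' q)) = vec_sqnorm {..<N} F (\<lambda>p. w (\<pi>' (\<pi> p)))"
      by (rule vec_sqnorm_reindex[OF \<pi>, symmetric])
    also have "\<dots> = vec_sqnorm {..<N} F w"
      unfolding vec_sqnorm_def by (intro sum.cong refl) (simp add: left_inv)
    finally show ?thesis .
  qed
  ultimately show "cmod (mat_form {..<N} (\<lambda>p q. B (\<pi> p) (\<pi> q)) F \<eta> \<xi>) \<le> M"
    using bound[OF \<open>y \<in> X\<close> \<open>finite F\<close> \<open>F \<subseteq> fibre y\<close>] unit by simp
qed

lemma redNorm_le_l1:
  assumes "\<And>S. finite S \<Longrightarrow> S \<subseteq> Gr \<Longrightarrow> (\<Sum>s\<in>S. cmod (b s)) \<le> M"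
  shows "redNorm Gr X d m i b \<le> ereal M"
  unfolding redNorm_def
proof (rule matNorm_leI)
  fix x F \<xi> \<eta> assume "x \<in> X" "finite F" "F \<subseteq> fibre x"
    and unit: "vec_sqnorm {..<1::nat} F \<xi> \<le> 1" "vec_sqnorm {..<1::nat} F \<eta> \<le> 1"
  define f where "f \<gamma> = cmod (\<eta> 0 \<gamma>)" for \<gamma>
  define g where "g \<gamma> = cmod (\<xi> 0 \<gamma>)" for \<gamma>
  define q where "q p = m (fst p) (i (snd p))" for p
  have q_arrow: "q ` (F \<times> F) \<subseteq> Gr"
    using \<open>F \<subseteq> fibre x\<close> by (auto simp: q_def subset_iff)
  \<comment> \<open>the pairs with a given quotient form a partial matching of \<open>F\<close> with itself\<close>
  have level: "(\<Sum>p\<in>{p\<in>F \<times> F. q p = s}. f (fst p) * g (snd p)) \<le> 1" for s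
  proof -
    have "(\<Sum>p\<in>{p\<in>F \<times> F. q p = s}. f (fst p) * g (snd p)) \<le> ((\<Sum>a\<in>F. (f a)\<^sup>2) + (\<Sum>b\<in>F. (g b)\<^sup>2)) / 2"
      using quotient_level_set_injective[OF \<open>F \<subseteq> fibre x\<close>] \<open>finite F\<close>
      by (intro sum_partial_matching_le) (auto simp: q_def)
    also have "\<dots> \<le> 1"
      using unit by (simp add: vec_sqnorm_def f_def g_def)
    finally show ?thesis .
  qed
  have "cmod (mat_form {..<1} (\<lambda>_ _. b) F \<eta> \<xi>) = cmod (\<Sum>p\<in>F \<times> F. cnj (\<eta> 0 (fst p)) * b (q p) * \<xi> 0 (snd p))"
    unfolding mat_form_def q_def by (simp add: lessThan_Suc) (simp add: sum.cartesian_product case_prod_beta)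
  also have "\<dots> \<le> (\<Sum>p\<in>F \<times> F. cmod (b (q p)) * (f (fst p) * g (snd p)))"
    by (rule order_trans[OF norm_sum]) (simp add: norm_mult mult_ac f_def g_def)
  also have "\<dots> = (\<Sum>s\<in>q ` (F \<times> F). cmod (b s) * (\<Sum>p\<in>{p\<in>F \<times> F. q p = s}. f (fst p) * g (snd p)))"
    using \<open>finite F\<close> by (subst sum.group[symmetric, of "F \<times> F" "q ` (F \<times> F)" q]) (auto simp: sum_distrib_left)
  also have "\<dots> \<le> (\<Sum>s\<in>q ` (F \<times> F). cmod (b s))"
    by (intro sum_mono mult_left_le level norm_ge_zero)
  also have "\<dots> \<le> M"
    by (rule assms) (use q_arrow \<open>finite F\<close> in auto)
  finally show "cmod (mat_form {..<1} (\<lambda>_ _. b) F \<eta> \<xi>) \<le> M" .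
qed

lemma redNorm_zero:
  assumes "X \<noteq> {}"
  shows "redNorm Gr X d m i (\<lambda>_. 0) = 0"
proof (rule antisym)
  show "redNorm Gr X d m i (\<lambda>_. 0) \<le> 0"
    using redNorm_le_l1[of "\<lambda>_. 0" 0] by (simp add: zero_ereal_def)
  show "0 \<le> redNorm Gr X d m i (\<lambda>_. 0)"
    unfolding redNorm_def by (rule matNorm_nonneg[OF assms])
qed

lemma value_le_redNorm:
  assumes "\<gamma> \<in> Gr"
  shows "ereal (cmod (b \<gamma>)) \<le> redNorm Gr X d m i b"
proof -
  define x where "x = d \<gamma>"
  define \<eta> where "\<eta> k \<alpha> = (if \<alpha> = \<gamma> then 1 else 0 :: complex)" for k :: nat and \<alpha>
  define \<xi> where "\<xi> k \<alpha> = (if \<alpha> = x then 1 else 0 :: complex)" for k :: nat and \<alpha>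
  have "x \<in> X" "{\<gamma>, x} \<subseteq> fibre x"
    using assms units_subset by (auto simp: x_def)
  moreover have "vec_sqnorm {..<1} {\<gamma>, x} \<xi> \<le> 1" "vec_sqnorm {..<1} {\<gamma>, x} \<eta> \<le> 1"
    by (simp_all add: vec_sqnorm_def \<eta>_def \<xi>_def lessThan_Suc if_distrib[of cmod]
        if_distrib[of "\<lambda>t::real. t\<^sup>2"] cong: if_cong)
  ultimately have "ereal (cmod (mat_form {..<1} (\<lambda>_ _. b) {\<gamma>, x} \<eta> \<xi>)) \<le> redNorm Gr X d m i b"
    unfolding redNorm_def by (intro mat_form_le_matNorm) auto
  moreover have "mat_form {..<1} (\<lambda>_ _. b) {\<gamma>, x} \<eta> \<xi> = b (m \<gamma> (i x))"
    by (cases "\<gamma> = x") (simp_all add: mat_form_def \<eta>_def \<xi>_def lessThan_Suc)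
  moreover have "m \<gamma> (i x) = \<gamma>"
    using assms by (simp add: x_def)
  ultimately show ?thesis
    by simp
qed

lemma Cc_subset_Crs:
  assumes "X \<noteq> {}"
  shows "Cc Gr \<subseteq> Crs Gr X d m i"
proof
  fix a assume "a \<in> Cc Gr"
  then show "a \<in> Crs Gr X d m i"
    unfolding Crs_def using redNorm_zero[OF assms] by (auto simp: Cc_def intro!: exI[of _ "\<lambda>_. a"])
qed

lemma ptmass_in_Cc:
  assumes "\<gamma> \<in> Gr"
  shows "ptmass \<gamma> \<in> Cc Gr" and "(\<lambda>\<alpha>. c * ptmass \<gamma> \<alpha>) \<in> Cc Gr"
  using assms unfolding Cc_def ptmass_def by (auto intro: finite_subset[of _ "{\<gamma>}"])

lemma ptmass_in_Crs:
  assumes "\<gamma> \<in> Gr"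
  shows "ptmass \<gamma> \<in> Crs Gr X d m i" and "(\<lambda>\<alpha>. c * ptmass \<gamma> \<alpha>) \<in> Crs Gr X d m i"
proof -
  have "X \<noteq> {}"
    using assms d_in_units by blast
  then show "ptmass \<gamma> \<in> Crs Gr X d m i" and "(\<lambda>\<alpha>. c * ptmass \<gamma> \<alpha>) \<in> Crs Gr X d m i"
    using Cc_subset_Crs ptmass_in_Cc[OF assms] by blast+
qed

lemma redNorm_ptmass_le_1:
  assumes "\<gamma> \<in> Gr"
  shows "redNorm Gr X d m i (ptmass \<gamma>) \<le> 1"
proof -
  have "(\<Sum>s\<in>S. cmod (ptmass \<gamma> s)) \<le> 1" if "finite S" for S
    using that by (simp add: ptmass_def if_distrib[of cmod] cong: if_cong)
  then show ?thesis
    using redNorm_le_l1[of "ptmass \<gamma>" 1] by (simp add: one_ereal_def)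
qed

lemma abs_summable_in_Crs:
  assumes "X \<noteq> {}" and summable: "(\<lambda>\<gamma>. cmod (a \<gamma>)) summable_on Gr" and "\<And>\<gamma>. \<gamma> \<notin> Gr \<Longrightarrow> a \<gamma> = 0"
  shows "a \<in> Crs Gr X d m i"
proof -
  define f where "f = (\<lambda>\<gamma>. cmod (a \<gamma>))"
  have "\<exists>F. finite F \<and> F \<subseteq> Gr \<and> dist (sum f F) (infsum f Gr) \<le> 1 / Suc N" for N
    using summable unfolding f_def by (intro infsum_finite_approximation) auto
  then obtain F where F: "\<And>N. finite (F N)" "\<And>N. F N \<subseteq> Gr"
    "\<And>N. dist (sum f (F N)) (infsum f Gr) \<le> 1 / Suc N"
    by metis
  define b where "b N \<gamma> = (if \<gamma> \<in> F N then a \<gamma> else 0)" for N \<gamma>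
  have b_Cc: "b N \<in> Cc Gr" for N
    using F(1,2) by (auto simp: Cc_def b_def intro: finite_subset[of _ "F N"])
  have tail: "redNorm Gr X d m i (\<lambda>\<gamma>. a \<gamma> - b N \<gamma>) \<le> ereal (1 / Suc N)" for N
  proof (rule redNorm_le_l1)
    fix S assume "finite S" "S \<subseteq> Gr"
    have "(\<Sum>s\<in>S. cmod (a s - b N s)) = (\<Sum>s\<in>S. if s \<in> F N then 0 else f s)"
      by (rule sum.cong) (auto simp: b_def f_def)
    also have "\<dots> = sum f (S - F N)"
      using \<open>finite S\<close> by (simp add: sum.If_cases Diff_eq)
    also have "\<dots> = sum f (S \<union> F N) - sum f (F N)"
      using \<open>finite S\<close> F(1) sum.union_disjoint[of "S - F N" "F N" f] by (simp add: Int_commute)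
    also have "\<dots> \<le> infsum f Gr - sum f (F N)"
      using \<open>finite S\<close> \<open>S \<subseteq> Gr\<close> F(1,2) summable
      by (intro diff_right_mono finite_sum_le_infsum) (auto simp: f_def)
    also have "\<dots> \<le> 1 / Suc N"
      using F(3)[of N] by (simp add: dist_real_def)
    finally show "(\<Sum>s\<in>S. cmod (a s - b N s)) \<le> 1 / Suc N" .
  qed
  have "(\<lambda>N. ereal (1 / Suc N)) \<longlonglongrightarrow> 0"
    using tendsto_ereal[OF LIMSEQ_inverse_real_of_nat] by (simp add: zero_ereal_def inverse_eq_divide)
  then have "(\<lambda>N. redNorm Gr X d m i (\<lambda>\<gamma>. a \<gamma> - b N \<gamma>)) \<longlonglongrightarrow> 0"
  proof (rule tendsto_sandwich[OF _ _ tendsto_const, rotated 2])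
    show "\<forall>\<^sub>F N in sequentially. 0 \<le> redNorm Gr X d m i (\<lambda>\<gamma>. a \<gamma> - b N \<gamma>)"
      unfolding redNorm_def using matNorm_nonneg[OF assms(1)] by simp
    show "\<forall>\<^sub>F N in sequentially. redNorm Gr X d m i (\<lambda>\<gamma>. a \<gamma> - b N \<gamma>) \<le> ereal (1 / Suc N)"
      using tail by simp
  qed
  then show ?thesis
    unfolding Crs_def using assms(3) b_Cc by (intro CollectI conjI exI[of _ b]) auto
qed

lemma Crs_function_with_support:
  assumes "V \<subseteq> Gr" "X \<noteq> {}"
  obtains a where "a \<in> Crs Gr X d m i" "\<And>\<gamma>. a \<gamma> \<noteq> 0 \<longleftrightarrow> \<gamma> \<in> V"
proof -
  have "countable V"
    using countable_arrows assms(1) by (rule countable_subset[rotated])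
  define w where "w \<gamma> = (if \<gamma> \<in> V then (1/2::real) ^ to_nat_on V \<gamma> else 0)" for \<gamma>
  have "(\<lambda>\<gamma>. cmod (complex_of_real (w \<gamma>))) summable_on Gr"
    using summable_on_power_half_injective[OF inj_on_to_nat_on[OF \<open>countable V\<close>]]
    by (simp add: w_def if_distrib[of abs] cong: if_cong)
  then have "(\<lambda>\<gamma>. complex_of_real (w \<gamma>)) \<in> Crs Gr X d m i"
    using assms by (intro abs_summable_in_Crs) (auto simp: w_def)
  moreover have "complex_of_real (w \<gamma>) \<noteq> 0 \<longleftrightarrow> \<gamma> \<in> V" for \<gamma>
    by (simp add: w_def)
  ultimately show ?thesis
    using that by blast
qed

section \<open>The symbol \<open>\<phi>\<^sub>T\<close>\<close>

lemma phiT_eq_ptmass: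
  assumes "\<gamma> \<in> Gr"
  shows "phiT Gr X d m i T \<gamma> = T (ptmass \<gamma>) \<gamma>"
proof -
  have "phiT Gr X d m i T \<gamma> = infsum (\<lambda>\<beta>. ptmass (i \<gamma>) (m (d \<gamma>) (i \<beta>)) * T (ptmass \<gamma>) \<beta>) (fibre (d \<gamma>))"
    using assms by (simp add: phiT_def condexp_def conv_def)
  also have "\<dots> = T (ptmass \<gamma>) \<gamma>"
  proof (rule infsum_eq_single[THEN trans])
    show "\<gamma> \<in> fibre (d \<gamma>)"
      using assms by simp
    show "ptmass (i \<gamma>) (m (d \<gamma>) (i \<beta>)) * T (ptmass \<gamma>) \<beta> = 0" if "\<beta> \<in> fibre (d \<gamma>)" "\<beta> \<noteq> \<gamma>" for \<beta>
    proof -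
      have "m (d \<gamma>) (i \<beta>) = i \<beta>"
        using that(1) mult_d_inv[of \<beta>] by simp
      moreover have "i \<beta> \<noteq> i \<gamma>"
        using that assms by (metis (no_types, lifting) inv_inv mem_Collect_eq)
      ultimately show ?thesis
        by (simp add: ptmass_def)
    qed
  qed (use assms in \<open>simp add: ptmass_def\<close>)
  finally show ?thesis .
qed

lemma phiT_le_opNorm:
  assumes "\<gamma> \<in> Gr"
  shows "ereal (cmod (phiT Gr X d m i T \<gamma>)) \<le> opNorm Gr X d m i T"
proof -
  have "redNorm Gr X d m i (T (ptmass \<gamma>)) \<le> opNorm Gr X d m i T"
    unfolding opNorm_def by (rule Sup_upper) (use ptmass_in_Crs(1)[OF assms] redNorm_ptmass_le_1[OF assms] in blast)
  then show ?thesis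
    using value_le_redNorm[OF assms, of "T (ptmass \<gamma>)"] phiT_eq_ptmass[OF assms] by simp
qed

lemma inner_C0_fibre_single:
  assumes "s \<in> Gr" "\<And>\<beta>. \<beta> \<in> fibre (d s) \<Longrightarrow> \<beta> \<noteq> s \<Longrightarrow> a \<beta> = 0"
  shows "inner_C0 Gr X d m i g a (d s) = cnj (g s) * a s"
proof -
  have "inner_C0 Gr X d m i g a (d s) = infsum (\<lambda>\<beta>. invol Gr i g (m (d s) (i \<beta>)) * a \<beta>) (fibre (d s))"
    using assms(1) by (simp add: inner_C0_def condexp_def conv_def)
  also have "\<dots> = invol Gr i g (m (d s) (i s)) * a s"
    by (rule infsum_eq_single) (use assms in auto)
  also have "\<dots> = cnj (g s) * a s"
    using assms(1) by (simp add: invol_def)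
  finally show ?thesis .
qed

end

section \<open>Finite rank operators\<close>

locale finite_rank_operator = groupoid Gr X d r i m
  for Gr X :: "'g set" and d r i :: "'g \<Rightarrow> 'g" and m :: "'g \<Rightarrow> 'g \<Rightarrow> 'g" +
  fixes T :: "('g \<Rightarrow> complex) \<Rightarrow> 'g \<Rightarrow> complex" and k :: nat and hs gs :: "nat \<Rightarrow> 'g \<Rightarrow> complex"
  assumes T_finite_rank:
    "a \<in> Crs Gr X d m i \<Longrightarrow> T a = (\<lambda>\<gamma>. \<Sum>j<k. ract d (hs j) (inner_C0 Gr X d m i (gs j) a) \<gamma>)"
    and T_range_Cc: "a \<in> Crs Gr X d m i \<Longrightarrow> T a \<in> Cc Gr"
begin

lemma T_apply_fibre_single:
  assumes "a \<in> Crs Gr X d m i" "s \<in> Gr" "\<And>\<beta>. \<beta> \<in> fibre (d s) \<Longrightarrow> \<beta> \<noteq> s \<Longrightarrow> a \<beta> = 0" "d \<alpha> = d s"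
  shows "T a \<alpha> = a s * (\<Sum>j<k. hs j \<alpha> * cnj (gs j s))"
  using T_finite_rank[OF assms(1)] inner_C0_fibre_single[OF assms(2,3)] assms(4)
  by (simp add: ract_def sum_distrib_left mult_ac)

lemma phiT_finite_rank:
  assumes "s \<in> Gr"
  shows "phiT Gr X d m i T s = (\<Sum>j<k. hs j s * cnj (gs j s))"
  using phiT_eq_ptmass[OF assms] T_apply_fibre_single[OF ptmass_in_Crs(1)[OF assms] assms, of s]
  by (simp add: ptmass_def)

lemma finite_fibre_support: "finite {s\<in>fibre x. phiT Gr X d m i T s \<noteq> 0}"
proof -
  have "finite {\<alpha>\<in>fibre x. (\<Sum>j<k. hs j \<alpha> * cnj (gs j \<alpha>)) \<noteq> 0}"
  proof (rule finite_diagonal_support[where h="\<lambda>\<alpha> j. hs j \<alpha>" and v="\<lambda>s j. cnj (gs j s)"])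
    fix s assume s: "s \<in> fibre x"
    then have "{\<alpha>\<in>fibre x. (\<Sum>j<k. hs j \<alpha> * cnj (gs j s)) \<noteq> 0} \<subseteq> {\<alpha>. T (ptmass s) \<alpha> \<noteq> 0}"
      using T_apply_fibre_single[OF ptmass_in_Crs(1), of s s] by (auto simp: ptmass_def)
    moreover have "finite {\<alpha>. T (ptmass s) \<alpha> \<noteq> 0}"
      using T_range_Cc ptmass_in_Crs(1) s by (auto simp: Cc_def)
    ultimately show "finite {\<alpha>\<in>fibre x. (\<Sum>j<k. hs j \<alpha> * cnj (gs j s)) \<noteq> 0}"
      by (rule finite_subset)
  qed
  moreover have "{s\<in>fibre x. phiT Gr X d m i T s \<noteq> 0} = {\<alpha>\<in>fibre x. (\<Sum>j<k. hs j \<alpha> * cnj (gs j \<alpha>)) \<noteq> 0}"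
    using phiT_finite_rank by auto
  ultimately show ?thesis
    by simp
qed

lemma T_apply_eq_mult_phiT:
  assumes "a \<in> Crs Gr X d m i" "\<gamma> \<in> Gr" "\<And>\<beta>. \<beta> \<in> fibre (d \<gamma>) \<Longrightarrow> \<beta> \<noteq> \<gamma> \<Longrightarrow> a \<beta> = 0"
  shows "T a \<gamma> = a \<gamma> * phiT Gr X d m i T \<gamma>"
  using T_apply_fibre_single[OF assms refl] phiT_finite_rank[OF assms(2)] by simp

lemma finite_sources_of_support: "finite (d ` {s\<in>Gr. phiT Gr X d m i T s \<noteq> 0})"
proof (rule ccontr)
  assume "infinite (d ` {s\<in>Gr. phiT Gr X d m i T s \<noteq> 0})"
  then obtain V where V: "V \<subseteq> {s\<in>Gr. phiT Gr X d m i T s \<noteq> 0}" "inj_on d V" "infinite V"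
    by (rule infinite_image_obtains_inj_subset)
  then obtain \<gamma>0 where "\<gamma>0 \<in> Gr"
    using infinite_imp_nonempty by blast
  then have "X \<noteq> {}"
    using d_in_units by blast
  obtain a where a: "a \<in> Crs Gr X d m i" "\<And>\<gamma>. a \<gamma> \<noteq> 0 \<longleftrightarrow> \<gamma> \<in> V"
    using Crs_function_with_support[of V] V(1) \<open>X \<noteq> {}\<close> by auto
  have "T a \<gamma> \<noteq> 0" if "\<gamma> \<in> V" for \<gamma>
  proof -
    have "\<gamma> \<in> Gr" "phiT Gr X d m i T \<gamma> \<noteq> 0"
      using that V(1) by auto
    moreover have "a \<beta> = 0" if "\<beta> \<in> fibre (d \<gamma>)" "\<beta> \<noteq> \<gamma>" for \<beta>
      using that \<open>\<gamma> \<in> V\<close> V(2) a(2) by (auto dest: inj_onD)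
    ultimately show ?thesis
      using T_apply_eq_mult_phiT[OF a(1)] a(2) \<open>\<gamma> \<in> V\<close> by simp
  qed
  then have "V \<subseteq> {\<gamma>. T a \<gamma> \<noteq> 0}"
    by blast
  moreover have "finite {\<gamma>. T a \<gamma> \<noteq> 0}"
    using T_range_Cc[OF a(1)] by (simp add: Cc_def)
  ultimately show False
    using V(3) finite_subset by blast
qed

lemma phiT_in_Cc: "phiT Gr X d m i T \<in> Cc Gr"
proof -
  have "{\<gamma>. phiT Gr X d m i T \<gamma> \<noteq> 0} \<subseteq> (\<Union>x\<in>d ` {s\<in>Gr. phiT Gr X d m i T s \<noteq> 0}. {s\<in>fibre x. phiT Gr X d m i T s \<noteq> 0})"
    by (auto simp: phiT_def split: if_splits)
  moreover have "finite (\<Union>x\<in>d ` {s\<in>Gr. phiT Gr X d m i T s \<noteq> 0}. {s\<in>fibre x. phiT Gr X d m i T s \<noteq> 0})"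
    using finite_sources_of_support finite_fibre_support by blast
  ultimately show ?thesis
    unfolding Cc_def by (auto simp: phiT_def intro: finite_subset split: if_splits)
qed

end

lemma (in groupoid) phiT_in_Cc_if_finite_rank:
  fixes k :: nat
  assumes "\<forall>a\<in>Crs Gr X d m i. T a = (\<lambda>\<gamma>. \<Sum>j<k. ract d (hs j) (inner_C0 Gr X d m i (gs j) a) \<gamma>)"
    and "\<forall>a\<in>Crs Gr X d m i. T a \<in> Cc Gr"
  shows "phiT Gr X d m i T \<in> Cc Gr"
proof -
  have "finite_rank_operator Gr X d r i m T k hs gs"
    using assms discrete_groupoid by unfold_locales auto
  then show ?thesis
    by (rule finite_rank_operator.phiT_in_Cc)
qed

section \<open>The multiplier norm of \<open>\<phi>\<^sub>T\<close>\<close>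

context groupoid
begin

text \<open>The matrix \<open>B\<close> of the proof idea; its rows and columns are indexed by pairs \<open>(k, \<gamma>)\<close>.\<close>

definition ptmass_matrix :: "(nat \<Rightarrow> nat \<Rightarrow> 'g \<Rightarrow> complex) \<Rightarrow> nat \<times> 'g \<Rightarrow> nat \<times> 'g \<Rightarrow> 'g \<Rightarrow> complex" where
  "ptmass_matrix A P Q \<alpha> = A (fst P) (fst Q) (m (snd P) (i (snd Q))) * ptmass (m (snd P) (i (snd Q))) \<alpha>"

definition translate_vec :: "(nat \<times> 'g \<Rightarrow> 'g \<Rightarrow> complex) \<Rightarrow> 'g set \<Rightarrow> 'g \<Rightarrow> nat \<Rightarrow> 'g \<Rightarrow> complex" where
  "translate_vec w F' g k \<gamma> = (if m \<gamma> g \<in> F' then w (k, \<gamma>) (m \<gamma> g) else 0)"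

lemma sum_sqnorm_translate_le:
  assumes "finite G0" "G0 \<subseteq> {g\<in>Gr. r g = x}" "F \<subseteq> fibre x" "finite F'"
  shows "(\<Sum>g\<in>G0. vec_sqnorm I F (translate_vec w F' g)) \<le> vec_sqnorm (I \<times> F) F' w"
proof -
  have "(\<Sum>g\<in>G0. vec_sqnorm I F (translate_vec w F' g)) = (\<Sum>k\<in>I. \<Sum>\<gamma>\<in>F. \<Sum>g\<in>G0. (cmod (translate_vec w F' g k \<gamma>))\<^sup>2)"
    unfolding vec_sqnorm_def by (simp only: sum.swap[where A = G0])
  also have "\<dots> \<le> (\<Sum>k\<in>I. \<Sum>\<gamma>\<in>F. \<Sum>\<alpha>\<in>F'. (cmod (w (k, \<gamma>) \<alpha>))\<^sup>2)"
  proof (intro sum_mono)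
    fix k \<gamma> assume "\<gamma> \<in> F"
    have "inj_on (m \<gamma>) G0"
    proof (rule inj_onI)
      fix g g' assume "g \<in> G0" "g' \<in> G0" "m \<gamma> g = m \<gamma> g'"
      moreover from this(1,2) have "g \<in> Gr" "r g = x" "g' \<in> Gr" "r g' = x"
        using assms(2) by auto
      moreover have "\<gamma> \<in> Gr" "d \<gamma> = x"
        using assms(3) \<open>\<gamma> \<in> F\<close> by auto
      ultimately show "g = g'"
        using left_cancel[of \<gamma> g g'] by simp
    qed
    have "(\<Sum>g\<in>G0. (cmod (translate_vec w F' g k \<gamma>))\<^sup>2) = (\<Sum>g\<in>G0. if m \<gamma> g \<in> F' then (cmod (w (k, \<gamma>) (m \<gamma> g)))\<^sup>2 else 0)"
      by (rule sum.cong) (simp_all add: translate_vec_def)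
    also have "\<dots> = (\<Sum>g\<in>{g\<in>G0. m \<gamma> g \<in> F'}. (cmod (w (k, \<gamma>) (m \<gamma> g)))\<^sup>2)"
      using assms(1) by (rule sum.inter_filter[symmetric])
    also have "\<dots> = (\<Sum>\<alpha>\<in>m \<gamma> ` {g\<in>G0. m \<gamma> g \<in> F'}. (cmod (w (k, \<gamma>) \<alpha>))\<^sup>2)"
      using inj_on_subset[OF \<open>inj_on (m \<gamma>) G0\<close>] by (simp add: sum.reindex)
    also have "\<dots> \<le> (\<Sum>\<alpha>\<in>F'. (cmod (w (k, \<gamma>) \<alpha>))\<^sup>2)"
      using assms(4) by (intro sum_mono2) auto
    finally show "(\<Sum>g\<in>G0. (cmod (translate_vec w F' g k \<gamma>))\<^sup>2) \<le> (\<Sum>\<alpha>\<in>F'. (cmod (w (k, \<gamma>) \<alpha>))\<^sup>2)" .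
  qed
  also have "\<dots> = vec_sqnorm (I \<times> F) F' w"
    by (simp add: vec_sqnorm_product)
  finally show ?thesis .
qed

lemma mat_form_ptmass_matrix_eq_sum:
  assumes "F \<subseteq> fibre x" "finite F'" "F' \<subseteq> fibre y"
    and "finite G0" "G0 \<subseteq> {g\<in>Gr. r g = x}" "\<And>\<gamma>. \<gamma> \<in> F \<Longrightarrow> {g\<in>Gr. r g = x \<and> m \<gamma> g \<in> F'} \<subseteq> G0"
  shows "mat_form (I \<times> F) (ptmass_matrix A) F' \<eta> \<xi> = (\<Sum>g\<in>G0. mat_form I A F (translate_vec \<eta> F' g) (translate_vec \<xi> F' g))"
proof -
  have inner: "(\<Sum>\<alpha>\<in>F'. \<Sum>\<alpha>'\<in>F'. if m \<alpha> (i \<alpha>') = m \<gamma> (i \<beta>) then cnj (\<eta> (k, \<gamma>) \<alpha>) * A k j (m \<gamma> (i \<beta>)) * \<xi> (j, \<beta>) \<alpha>' else 0)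
      = (\<Sum>g\<in>G0. cnj (translate_vec \<eta> F' g k \<gamma>) * A k j (m \<gamma> (i \<beta>)) * translate_vec \<xi> F' g j \<beta>)"
    if "\<gamma> \<in> F" "\<beta> \<in> F" for k j \<gamma> \<beta>
  proof -
    have "(\<Sum>\<alpha>\<in>F'. \<Sum>\<alpha>'\<in>F'. if m \<alpha> (i \<alpha>') = m \<gamma> (i \<beta>) then cnj (\<eta> (k, \<gamma>) \<alpha>) * A k j (m \<gamma> (i \<beta>)) * \<xi> (j, \<beta>) \<alpha>' else 0)
      = (\<Sum>g\<in>G0. if m \<gamma> g \<in> F' \<and> m \<beta> g \<in> F'
           then cnj (\<eta> (k, \<gamma>) (m \<gamma> g)) * A k j (m \<gamma> (i \<beta>)) * \<xi> (j, \<beta>) (m \<beta> g) else 0)"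
      using that assms by (intro sum_pairs_same_quotient[where x = x and y = y]) auto
    also have "\<dots> = (\<Sum>g\<in>G0. cnj (translate_vec \<eta> F' g k \<gamma>) * A k j (m \<gamma> (i \<beta>)) * translate_vec \<xi> F' g j \<beta>)"
      by (intro sum.cong refl) (simp add: translate_vec_def)
    finally show ?thesis .
  qed
  have "mat_form (I \<times> F) (ptmass_matrix A) F' \<eta> \<xi>
    = (\<Sum>k\<in>I. \<Sum>\<gamma>\<in>F. \<Sum>j\<in>I. \<Sum>\<beta>\<in>F. \<Sum>\<alpha>\<in>F'. \<Sum>\<alpha>'\<in>F'.
        if m \<alpha> (i \<alpha>') = m \<gamma> (i \<beta>) then cnj (\<eta> (k, \<gamma>) \<alpha>) * A k j (m \<gamma> (i \<beta>)) * \<xi> (j, \<beta>) \<alpha>' else 0)"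
    unfolding mat_form_product by (intro sum.cong refl) (simp add: ptmass_matrix_def ptmass_def)
  also have "\<dots> = (\<Sum>k\<in>I. \<Sum>\<gamma>\<in>F. \<Sum>j\<in>I. \<Sum>\<beta>\<in>F. \<Sum>g\<in>G0.
      cnj (translate_vec \<eta> F' g k \<gamma>) * A k j (m \<gamma> (i \<beta>)) * translate_vec \<xi> F' g j \<beta>)"
    by (rule sum.cong[OF refl])+ (rule inner)
  also have "\<dots> = (\<Sum>g\<in>G0. mat_form I A F (translate_vec \<eta> F' g) (translate_vec \<xi> F' g))"
    unfolding mat_form_def by (simp only: sum.swap[where B = G0] sum.swap[where A = F and B = I])
  finally show ?thesis .
qed

lemma mat_form_ptmass_matrix_le:
  assumes A: "matNorm Gr X d m i n A \<le> 1" and "x \<in> X" "finite F" "F \<subseteq> fibre x"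
    and "finite F'" "F' \<subseteq> fibre y"
  shows "cmod (mat_form ({..<n} \<times> F) (ptmass_matrix A) F' \<eta> \<xi>)
    \<le> (vec_sqnorm ({..<n} \<times> F) F' \<eta> + vec_sqnorm ({..<n} \<times> F) F' \<xi>) / 2"
proof -
  define G0 where "G0 = {g\<in>Gr. r g = x \<and> (\<exists>\<gamma>\<in>F. m \<gamma> g \<in> F')}"
  have "finite G0"
    unfolding G0_def using assms(3-5) by (rule finite_translates)
  have G0: "G0 \<subseteq> {g\<in>Gr. r g = x}" "\<And>\<gamma>. \<gamma> \<in> F \<Longrightarrow> {g\<in>Gr. r g = x \<and> m \<gamma> g \<in> F'} \<subseteq> G0"
    by (auto simp: G0_def)
  have "mat_form ({..<n} \<times> F) (ptmass_matrix A) F' \<eta> \<xi>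
      = (\<Sum>g\<in>G0. mat_form {..<n} A F (translate_vec \<eta> F' g) (translate_vec \<xi> F' g))"
    by (rule mat_form_ptmass_matrix_eq_sum[OF assms(4-6) \<open>finite G0\<close> G0])
  then have "cmod (mat_form ({..<n} \<times> F) (ptmass_matrix A) F' \<eta> \<xi>)
      \<le> (\<Sum>g\<in>G0. cmod (mat_form {..<n} A F (translate_vec \<eta> F' g) (translate_vec \<xi> F' g)))"
    by (simp add: norm_sum)
  also have "\<dots> \<le> (\<Sum>g\<in>G0. (vec_sqnorm {..<n} F (translate_vec \<eta> F' g) + vec_sqnorm {..<n} F (translate_vec \<xi> F' g)) / 2)"
    by (intro sum_mono mat_form_le_half_sqnorms[OF A assms(2-4)])
  also have "\<dots> = ((\<Sum>g\<in>G0. vec_sqnorm {..<n} F (translate_vec \<eta> F' g)) + (\<Sum>g\<in>G0. vec_sqnorm {..<n} F (translate_vec \<xi> F' g))) / 2"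
    by (simp only: sum_divide_distrib[symmetric] sum.distrib)
  also have "\<dots> \<le> (vec_sqnorm ({..<n} \<times> F) F' \<eta> + vec_sqnorm ({..<n} \<times> F) F' \<xi>) / 2"
    using sum_sqnorm_translate_le[OF \<open>finite G0\<close> G0(1) assms(4,5)] by (intro divide_right_mono add_mono) auto
  finally show ?thesis .
qed

lemma matNorm_ptmass_matrix_le_1:
  assumes "matNorm Gr X d m i n A \<le> 1" "x \<in> X" "finite F" "F \<subseteq> fibre x" "bij_betw \<pi> {..<N} ({..<n} \<times> F)"
  shows "matNorm Gr X d m i N (\<lambda>p q. ptmass_matrix A (\<pi> p) (\<pi> q)) \<le> 1"
proof -
  have "matNorm Gr X d m i N (\<lambda>p q. ptmass_matrix A (\<pi> p) (\<pi> q)) \<le> ereal 1"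
  proof (rule matNorm_reindex_leI[OF assms(5)])
    fix y F' \<xi> \<eta> assume "y \<in> X" "finite F'" "F' \<subseteq> fibre y"
      "vec_sqnorm ({..<n} \<times> F) F' \<xi> \<le> 1" "vec_sqnorm ({..<n} \<times> F) F' \<eta> \<le> 1"
    then show "cmod (mat_form ({..<n} \<times> F) (ptmass_matrix A) F' \<eta> \<xi>) \<le> 1"
      using mat_form_ptmass_matrix_le[OF assms(1-4), of F' y \<eta> \<xi>] by simp
  qed
  then show ?thesis
    by (simp add: one_ereal_def)
qed

lemma matNorm_T_ptmass_matrix_le_cbNorm:
  assumes "matNorm Gr X d m i n A \<le> 1" "x \<in> X" "finite F" "F \<subseteq> fibre x"
    and \<pi>: "bij_betw \<pi> {..<N} ({..<n} \<times> F)" and "1 \<le> N"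
  shows "matNorm Gr X d m i N (\<lambda>p q. T (ptmass_matrix A (\<pi> p) (\<pi> q))) \<le> cbNorm Gr X d m i T"
proof -
  have entries: "ptmass_matrix A (\<pi> p) (\<pi> q) \<in> Crs Gr X d m i" if "p < N" "q < N" for p q
  proof -
    have "snd (\<pi> p) \<in> F" "snd (\<pi> q) \<in> F"
      using that bij_betwE[OF \<pi>] by force+
    then have "snd (\<pi> p) \<in> fibre x" "snd (\<pi> q) \<in> fibre x"
      using assms(4) by blast+
    then show ?thesis
      using ptmass_in_Crs(2) by (simp add: ptmass_matrix_def[abs_def])
  qed
  show ?thesis
    unfolding cbNorm_def
    using \<open>1 \<le> N\<close> entries matNorm_ptmass_matrix_le_1[OF assms(1-4) \<pi>]
    by (intro Sup_upper CollectI exI[of _ N] exI[of _ "\<lambda>p q. ptmass_matrix A (\<pi> p) (\<pi> q)"]) auto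
qed

lemma mat_form_T_ptmass_matrix:
  assumes homog: "\<forall>c::complex. \<forall>a\<in>Crs Gr X d m i. T (\<lambda>\<gamma>. c * a \<gamma>) = (\<lambda>\<gamma>. c * T a \<gamma>)"
    and "finite F" "F \<subseteq> fibre x"
  shows "mat_form (I \<times> F) (\<lambda>P Q. T (ptmass_matrix A P Q)) F
      (\<lambda>P \<alpha>. if \<alpha> = snd P then \<eta> (fst P) \<alpha> else 0) (\<lambda>Q \<alpha>. if \<alpha> = snd Q then \<xi> (fst Q) \<alpha> else 0)
    = mat_form I (\<lambda>k j \<gamma>. phiT Gr X d m i T \<gamma> * A k j \<gamma>) F \<eta> \<xi>"
proof -
  have entry: "T (ptmass_matrix A (k, \<gamma>) (j, \<beta>)) (m \<gamma> (i \<beta>)) = phiT Gr X d m i T (m \<gamma> (i \<beta>)) * A k j (m \<gamma> (i \<beta>))"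
    if "\<gamma> \<in> F" "\<beta> \<in> F" for k j \<gamma> \<beta>
  proof -
    define s where "s = m \<gamma> (i \<beta>)"
    have "s \<in> Gr"
      using that assms(3) by (auto simp: s_def subset_iff)
    have "ptmass_matrix A (k, \<gamma>) (j, \<beta>) = (\<lambda>\<alpha>. A k j s * ptmass s \<alpha>)"
      by (rule ext) (simp add: ptmass_matrix_def s_def)
    then have "T (ptmass_matrix A (k, \<gamma>) (j, \<beta>)) s = A k j s * T (ptmass s) s"
      using homog ptmass_in_Crs(1)[OF \<open>s \<in> Gr\<close>] by simp
    then show ?thesis
      using phiT_eq_ptmass[OF \<open>s \<in> Gr\<close>] by (simp add: s_def mult.commute)
  qed
  have "mat_form (I \<times> F) (\<lambda>P Q. T (ptmass_matrix A P Q)) F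
      (\<lambda>P \<alpha>. if \<alpha> = snd P then \<eta> (fst P) \<alpha> else 0) (\<lambda>Q \<alpha>. if \<alpha> = snd Q then \<xi> (fst Q) \<alpha> else 0)
    = (\<Sum>k\<in>I. \<Sum>\<gamma>\<in>F. \<Sum>j\<in>I. \<Sum>\<beta>\<in>F. cnj (\<eta> k \<gamma>) * T (ptmass_matrix A (k, \<gamma>) (j, \<beta>)) (m \<gamma> (i \<beta>)) * \<xi> j \<beta>)"
    unfolding mat_form_product by (rule sum.cong[OF refl])+ (simp add: sum_sum_concentrated assms(2))
  also have "\<dots> = (\<Sum>k\<in>I. \<Sum>\<gamma>\<in>F. \<Sum>j\<in>I. \<Sum>\<beta>\<in>F. cnj (\<eta> k \<gamma>) * (phiT Gr X d m i T (m \<gamma> (i \<beta>)) * A k j (m \<gamma> (i \<beta>))) * \<xi> j \<beta>)"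
    by (rule sum.cong[OF refl])+ (simp add: entry)
  also have "\<dots> = mat_form I (\<lambda>k j \<gamma>. phiT Gr X d m i T \<gamma> * A k j \<gamma>) F \<eta> \<xi>"
    unfolding mat_form_def by (simp only: sum.swap[where A = F and B = I])
  finally show ?thesis .
qed

lemma cbNorm_nonneg:
  assumes "X \<noteq> {}"
  shows "0 \<le> cbNorm Gr X d m i T"
proof -
  have "(\<lambda>_. 0) \<in> Crs Gr X d m i"
    using Cc_subset_Crs[OF assms] by (auto simp: Cc_def)
  moreover have "matNorm Gr X d m i 1 (\<lambda>_ _ _. 0) \<le> 1"
    using redNorm_zero[OF assms] by (simp add: redNorm_def)
  ultimately have "matNorm Gr X d m i 1 (\<lambda>_ _. T (\<lambda>_. 0)) \<le> cbNorm Gr X d m i T"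
    unfolding cbNorm_def by (intro Sup_upper CollectI exI[of _ 1] exI[of _ "\<lambda>_ _ _. 0"]) auto
  then show ?thesis
    using matNorm_nonneg[OF assms, of 1 "\<lambda>_ _. T (\<lambda>_. 0)"] by simp
qed

lemma mat_form_mult_phiT_le_cbNorm:
  assumes homog: "\<forall>c::complex. \<forall>a\<in>Crs Gr X d m i. T (\<lambda>\<gamma>. c * a \<gamma>) = (\<lambda>\<gamma>. c * T a \<gamma>)"
    and "1 \<le> n" "matNorm Gr X d m i n A \<le> 1" "x \<in> X" "finite F" "F \<subseteq> fibre x"
    and "vec_sqnorm {..<n} F \<xi> \<le> 1" "vec_sqnorm {..<n} F \<eta> \<le> 1"
  shows "ereal (cmod (mat_form {..<n} (\<lambda>k j \<gamma>. phiT Gr X d m i T \<gamma> * A k j \<gamma>) F \<eta> \<xi>)) \<le> cbNorm Gr X d m i T"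
proof (cases "F = {}")
  case True
  then show ?thesis
    using cbNorm_nonneg assms(4) by (auto simp: mat_form_def zero_ereal_def)
next
  case False
  define N where "N = card ({..<n} \<times> F)"
  obtain \<pi> where \<pi>: "bij_betw \<pi> {..<N} ({..<n} \<times> F)"
    using ex_bij_betw_nat_finite[of "{..<n} \<times> F"] assms(5) by (auto simp: N_def atLeast0LessThan)
  have "1 \<le> N"
    using False assms(2,5) by (auto simp: N_def Suc_le_eq card_gt_0_iff)
  define \<eta>' where "\<eta>' P \<alpha> = (if \<alpha> = snd P then \<eta> (fst P) \<alpha> else 0)" for P \<alpha>
  define \<xi>' where "\<xi>' P \<alpha> = (if \<alpha> = snd P then \<xi> (fst P) \<alpha> else 0)" for P \<alpha>
  have "matNorm Gr X d m i N (\<lambda>p q. T (ptmass_matrix A (\<pi> p) (\<pi> q))) \<le> cbNorm Gr X d m i T"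
    by (rule matNorm_T_ptmass_matrix_le_cbNorm[OF assms(3-6) \<pi> \<open>1 \<le> N\<close>])
  moreover have "vec_sqnorm {..<N} F (\<lambda>p. \<xi>' (\<pi> p)) = vec_sqnorm {..<n} F \<xi>"
    "vec_sqnorm {..<N} F (\<lambda>p. \<eta>' (\<pi> p)) = vec_sqnorm {..<n} F \<eta>"
    unfolding vec_sqnorm_reindex[OF \<pi>] \<xi>'_def \<eta>'_def by (simp_all only: vec_sqnorm_concentrated[OF assms(5)])
  ultimately have "ereal (cmod (mat_form {..<N} (\<lambda>p q. T (ptmass_matrix A (\<pi> p) (\<pi> q))) F (\<lambda>p. \<eta>' (\<pi> p)) (\<lambda>p. \<xi>' (\<pi> p))))
      \<le> cbNorm Gr X d m i T"
    using mat_form_le_matNorm[OF assms(4-6)] assms(7,8) order_trans by (metis (no_types, lifting))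
  moreover have "mat_form {..<N} (\<lambda>p q. T (ptmass_matrix A (\<pi> p) (\<pi> q))) F (\<lambda>p. \<eta>' (\<pi> p)) (\<lambda>p. \<xi>' (\<pi> p))
      = mat_form {..<n} (\<lambda>k j \<gamma>. phiT Gr X d m i T \<gamma> * A k j \<gamma>) F \<eta> \<xi>"
    unfolding mat_form_reindex[OF \<pi>, of "\<lambda>P Q. T (ptmass_matrix A P Q)"] \<eta>'_def \<xi>'_def
    by (rule mat_form_T_ptmass_matrix[OF homog assms(5,6)])
  ultimately show ?thesis
    by simp
qed

lemma M0A_norm_phiT_le_cbNorm:
  assumes homog: "\<forall>c::complex. \<forall>a\<in>Crs Gr X d m i. T (\<lambda>\<gamma>. c * a \<gamma>) = (\<lambda>\<gamma>. c * T a \<gamma>)"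
  shows "M0A_norm Gr X d m i (phiT Gr X d m i T) \<le> cbNorm Gr X d m i T"
  unfolding M0A_norm_def cbNorm_def[of _ _ _ _ _ "\<lambda>a \<gamma>. phiT Gr X d m i T \<gamma> * a \<gamma>"]
proof (rule Sup_least, clarify)
  fix n A assume n: "1 \<le> n" and A: "matNorm Gr X d m i n A \<le> 1"
  show "matNorm Gr X d m i n (\<lambda>k j \<gamma>. phiT Gr X d m i T \<gamma> * A k j \<gamma>) \<le> cbNorm Gr X d m i T"
    unfolding matNorm_mat_form[of n] by (rule Sup_least) (auto intro: mat_form_mult_phiT_le_cbNorm[OF homog n A])
qed

end

theorem mainTheorem5:
  fixes Gr X :: "'g set" and d r i :: "'g \<Rightarrow> 'g" and m :: "'g \<Rightarrow> 'g \<Rightarrow> 'g"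
    and T :: "('g \<Rightarrow> complex) \<Rightarrow> ('g \<Rightarrow> complex)"
  assumes grp: "discrete_groupoid Gr X d r m i"
    and maps: "\<forall>a\<in>Crs Gr X d m i. T a \<in> Crs Gr X d m i"
    and additive: "\<forall>a\<in>Crs Gr X d m i. \<forall>b\<in>Crs Gr X d m i. T (\<lambda>\<gamma>. a \<gamma> + b \<gamma>) = (\<lambda>\<gamma>. T a \<gamma> + T b \<gamma>)"
    and homog: "\<forall>c::complex. \<forall>a\<in>Crs Gr X d m i. T (\<lambda>\<gamma>. c * a \<gamma>) = (\<lambda>\<gamma>. c * T a \<gamma>)"
    and C0lin: "\<forall>a\<in>Crs Gr X d m i. \<forall>f\<in>C0X X. T (ract d a f) = ract d (T a) f"
    and bdd: "opNorm Gr X d m i T < \<infinity>"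
  shows "(\<forall>\<gamma>\<in>Gr. ereal (cmod (phiT Gr X d m i T \<gamma>)) \<le> opNorm Gr X d m i T)
       \<and> ((\<exists>k::nat. \<exists>hs gs :: nat \<Rightarrow> 'g \<Rightarrow> complex.
               (\<forall>j<k. hs j \<in> Crs Gr X d m i \<and> gs j \<in> Crs Gr X d m i) \<and>
               (\<forall>a\<in>Crs Gr X d m i. T a = (\<lambda>\<gamma>. \<Sum>j<k. ract d (hs j) (inner_C0 Gr X d m i (gs j) a) \<gamma>)))
          \<and> (\<forall>a\<in>Crs Gr X d m i. T a \<in> Cc Gr)
          \<longrightarrow> phiT Gr X d m i T \<in> Cc Gr
              \<and> M0A_norm Gr X d m i (phiT Gr X d m i T) \<le> cbNorm Gr X d m i T)"
proof -
  interpret groupoid Gr X d r i m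
    by (rule groupoid.intro[OF grp])
  \<comment> \<open>of the hypotheses on \<open>T\<close>, only homogeneity is needed\<close>
  show ?thesis
    using phiT_le_opNorm phiT_in_Cc_if_finite_rank M0A_norm_phiT_le_cbNorm[OF homog] by blast
qed

end
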